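(* Let $I=[a,b]$ be a compact interval, $r\ge1$ an integer, $g\in C^r(I,\mathbb R)$ with $\|g'\|_{L^\infty(I)}\le1$, put $C_r:=\|g^{(r)}\|_{L^\infty(I)}$, and let $C>0$. Then for every $\lambda$ with $0<\lambda\le\|g\|_\infty$ and $C\lambda\le|I|$ there is a finite family of pairwise disjoint open (relative to $I$) intervals $I_{\lambda,i}$, $i\in\mathcal I_\lambda$, each of length $|I_{\lambda,i}|\ge C\lambda$, such that: (i) $|\mathcal I_\lambda|\le 30r\big(1+|I|\,C_r^{1/r}\lambda^{-1/r}\big)$; (ii) with $V_\lambda:=\bigcup_{i\in\mathcal I_\lambda}I_{\lambda,i}$, we have $\{t\in I:|g(t)|<\lambda\}\subset V_\lambda\subset\{t\in I:|g(t)|<(8+C)\lambda\}$.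
   Context: $\|g\|_\infty$ denotes the supremum of $|g|$ over $I$, and $|I|=b-a$. *)

theory Defs
  imports "HOL-Analysis.Analysis"
begin

text \<open>g is C^r on S with derivatives D 0 = g, D 1 = g', ..., D r = g^(r):
  each D k (k < r) has derivative D (Suc k) relative to S, and D r is continuous on S.\<close>
definition Cr_with_derivs :: "nat \<Rightarrow> (real \<Rightarrow> real) \<Rightarrow> real set \<Rightarrow> (nat \<Rightarrow> real \<Rightarrow> real) \<Rightarrow> bool" where
  "Cr_with_derivs r g S D \<longleftrightarrow>
     (\<forall>x\<in>S. D 0 x = g x) \<and>
     (\<forall>k<r. \<forall>x\<in>S. (D k has_real_derivative D (Suc k) x) (at x within S)) \<and>
     continuous_on S (D r)"

definition sup_norm_on :: "real set \<Rightarrow> (real \<Rightarrow> real) \<Rightarrow> real" where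
  "sup_norm_on S f = (SUP t\<in>S. \<bar>f t\<bar>)"

definition ivl_length :: "real set \<Rightarrow> real" where
  "ivl_length J = Sup J - Inf J"

end

theory Submission
  imports Defs "HOL-Computational_Algebra.Polynomial"
begin

text \<open>Let \<open>W = {t \<in> I. \<bar>g t\<bar> < (8 + C) \<lambda>}\<close> and take as intervals the components of \<open>W\<close>
  that meet \<open>{\<bar>g\<bar> < \<lambda>}\<close>. Since \<open>g\<close> is 1-Lipschitz, each of them contains a whole
  \<open>C \<lambda>\<close>-neighbourhood (in \<open>I\<close>) of such a point. To count them, cut \<open>I\<close> into
  \<open>N \<approx> 1 + |I| (C\<^sub>r/\<lambda>)\<^bsup>1/r\<^esup>\<close> pieces on which \<open>g\<close> is within \<open>\<lambda>\<close> of its Taylor polynomial \<open>P\<close> of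
  degree \<open>< r\<close>. On a piece, \<open>Q = P\<^sup>2 - 4\<lambda>\<^sup>2\<close> is negative where \<open>\<bar>g\<bar> < \<lambda>\<close> and positive
  outside \<open>W\<close>, so between two components met in the piece \<open>Q\<close> has a root; hence a piece
  meets at most \<open>deg Q + 1 \<le> 2r - 1\<close> of the components.\<close>

lemma Cr_with_derivs_continuous_on:
  assumes "Cr_with_derivs r g S D" "k \<le> r"
  shows "continuous_on S (D k)"
proof (cases "k = r")
  case True
  then show ?thesis using assms unfolding Cr_with_derivs_def by auto
next
  case False
  then have "\<And>x. x \<in> S \<Longrightarrow> (D k has_field_derivative D (Suc k) x) (at x within S)"
    using assms unfolding Cr_with_derivs_def by auto
  then show ?thesis by (rule DERIV_continuous_on)
qed

lemma Cr_with_derivs_imp_continuous_on: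
  assumes "Cr_with_derivs r g S D"
  shows "continuous_on S g"
proof -
  have "continuous_on S (D 0)" using Cr_with_derivs_continuous_on[OF assms] by simp
  moreover have "\<And>x. x \<in> S \<Longrightarrow> D 0 x = g x" using assms unfolding Cr_with_derivs_def by auto
  ultimately show ?thesis using continuous_on_cong by blast
qed

lemma abs_le_sup_norm_on:
  assumes "compact S" "continuous_on S f" "x \<in> S"
  shows "\<bar>f x\<bar> \<le> sup_norm_on S f"
proof -
  have "compact ((\<lambda>t. \<bar>f t\<bar>) ` S)"
    by (rule compact_continuous_image) (auto intro: continuous_intros assms)
  then have "bdd_above ((\<lambda>t. \<bar>f t\<bar>) ` S)" by (meson bounded_imp_bdd_above compact_imp_bounded)
  then show ?thesis unfolding sup_norm_on_def using assms(3) by (rule cSUP_upper2) simp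
qed

lemma sup_norm_on_nonneg:
  assumes "compact S" "continuous_on S f" "S \<noteq> {}"
  shows "0 \<le> sup_norm_on S f"
  using abs_le_sup_norm_on[OF assms(1,2)] assms(3) by (meson abs_ge_zero ex_in_conv order_trans)

lemma Cr_with_derivs_lipschitz:
  assumes "Cr_with_derivs r g {a..b} D" "r \<ge> 1" "x \<in> {a..b}" "y \<in> {a..b}"
  shows "\<bar>g x - g y\<bar> \<le> sup_norm_on {a..b} (D 1) * \<bar>x - y\<bar>"
proof -
  have cont: "continuous_on {a..b} (D 1)"
    using Cr_with_derivs_continuous_on[OF assms(1)] assms(2) by auto
  have "norm (D 0 x - D 0 y) \<le> sup_norm_on {a..b} (D 1) * norm (x - y)"
  proof (rule field_differentiable_bound[where f' = "D 1"])
    show "\<And>z. z \<in> {a..b} \<Longrightarrow> (D 0 has_field_derivative D 1 z) (at z within {a..b})"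
      using assms(1,2) unfolding Cr_with_derivs_def by auto
    show "\<And>z. z \<in> {a..b} \<Longrightarrow> norm (D 1 z) \<le> sup_norm_on {a..b} (D 1)"
      using abs_le_sup_norm_on[OF _ cont] by simp
  qed (use assms in auto)
  moreover have "D 0 x = g x" "D 0 y = g y"
    using assms(1,3,4) unfolding Cr_with_derivs_def by auto
  ultimately show ?thesis by simp
qed

lemma Cr_with_derivs_taylor_remainder:
  assumes "Cr_with_derivs r g {a..b} D" "r \<ge> 1"
    and "a \<le> c" "c \<le> x" "x \<le> b" "x - c \<le> h"
  shows "\<bar>g x - (\<Sum>i<r. (x - c) ^ i / fact i * D i c)\<bar> \<le> sup_norm_on {a..b} (D r) * h ^ r"
proof -
  define M where "M = sup_norm_on {a..b} (D r)"
  have cont: "continuous_on {a..b} (D r)" using Cr_with_derivs_continuous_on[OF assms(1)] by auto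
  have M0: "0 \<le> M" unfolding M_def using sup_norm_on_nonneg[OF _ cont] assms by auto
  have h0: "0 \<le> h" using assms by auto
  have derivs: "(D m has_vector_derivative D (Suc m) t) (at t within {c..x})"
    if "m < r" "c \<le> t" "t \<le> x" for m t
  proof -
    have "(D m has_field_derivative D (Suc m) t) (at t within {a..b})"
      using assms that unfolding Cr_with_derivs_def by auto
    then have "(D m has_field_derivative D (Suc m) t) (at t within {c..x})"
      by (rule DERIV_subset) (use assms in auto)
    then show ?thesis by (simp add: has_real_derivative_iff_has_vector_derivative)
  qed
  have "((\<lambda>t. ((x - t) ^ (r - 1) / fact (r - 1)) *\<^sub>R D r t) has_integral
      D 0 x - (\<Sum>i<r. ((x - c) ^ i / fact i) *\<^sub>R D i c)) {c..x}"
    using Taylor_has_integral[of r D "D 0" c x, OF _ refl derivs] assms by auto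
  then have integral: "((\<lambda>t. (x - t) ^ (r - 1) / fact (r - 1) * D r t) has_integral
      g x - (\<Sum>i<r. (x - c) ^ i / fact i * D i c)) (cbox c x)"
    using assms unfolding Cr_with_derivs_def by auto
  have integrand: "norm ((x - t) ^ (r - 1) / fact (r - 1) * D r t) \<le> h ^ (r - 1) * M"
    if "t \<in> cbox c x" for t
  proof -
    have t: "c \<le> t" "t \<le> x" using that by auto
    have "(x - t) ^ (r - 1) / fact (r - 1) \<le> (x - t) ^ (r - 1)"
      using t by (simp add: divide_le_eq fact_ge_1 mult_le_cancel_left1)
    also have "\<dots> \<le> h ^ (r - 1)" using t assms by (intro power_mono) auto
    finally have "(x - t) ^ (r - 1) / fact (r - 1) * \<bar>D r t\<bar> \<le> h ^ (r - 1) * M"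
      using abs_le_sup_norm_on[OF _ cont, of t] t assms M0 h0
      unfolding M_def by (intro mult_mono) auto
    then show ?thesis using t by (simp add: abs_mult)
  qed
  have "norm (g x - (\<Sum>i<r. (x - c) ^ i / fact i * D i c))
      \<le> h ^ (r - 1) * M * Henstock_Kurzweil_Integration.content (cbox c x)"
    by (rule has_integral_bound[OF _ integral integrand]) (use h0 M0 in auto)
  also have "\<dots> \<le> h ^ (r - 1) * M * h"
    using assms M0 h0 by (intro mult_left_mono) auto
  also have "\<dots> = M * h ^ r"
    using assms(2) by (cases r) auto
  finally show ?thesis unfolding M_def by simp
qed

lemma Cr_with_derivs_poly_approx:
  assumes "Cr_with_derivs r g {a..b} D" "r \<ge> 1" "a \<le> c" "c \<le> d" "d \<le> b"
  shows "\<exists>P :: real poly. degree P < r \<and>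
           (\<forall>x\<in>{c..d}. \<bar>g x - poly P x\<bar> \<le> sup_norm_on {a..b} (D r) * (d - c) ^ r)"
proof -
  define P :: "real poly" where "P = (\<Sum>i<r. smult (D i c / fact i) ([:- c, 1:] ^ i))"
  have "poly P x = (\<Sum>i<r. (x - c) ^ i / fact i * D i c)" for x
    unfolding P_def by (simp add: poly_sum mult.commute)
  then have "\<forall>x\<in>{c..d}. \<bar>g x - poly P x\<bar> \<le> sup_norm_on {a..b} (D r) * (d - c) ^ r"
    using Cr_with_derivs_taylor_remainder[OF assms(1,2,3)] assms(5) by auto
  moreover have "degree P \<le> r - 1"
    unfolding P_def
  proof (rule degree_sum_le)
    fix i assume "i \<in> {..<r}"
    have "degree (smult (D i c / fact i) ([:- c, 1:] ^ i)) \<le> degree ([:- c, 1 :: real:] ^ i)"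
      by (rule degree_smult_le)
    also have "\<dots> \<le> i" using degree_power_le[of "[:- c, 1 :: real:]" i] by simp
    finally show "degree (smult (D i c / fact i) ([:- c, 1:] ^ i)) \<le> r - 1"
      using \<open>i \<in> {..<r}\<close> by simp
  qed simp
  ultimately show ?thesis using assms(2) by (intro exI[of _ P]) auto
qed

lemma card_components_le_Suc_degree:
  fixes Q :: "real poly"
  assumes B: "B \<subseteq> components W"
    and nonpos: "{x \<in> {c..d}. poly Q x \<le> 0} \<subseteq> W"
    and neg: "\<forall>K\<in>B. \<exists>x\<in>K \<inter> {c..d}. poly Q x < 0"
  shows "finite B \<and> card B \<le> Suc (degree Q)"
proof (rule finite_if_finite_subsets_card_bdd)
  fix B' assume B': "B' \<subseteq> B" "finite B'"
  obtain sel where sel: "\<And>K. K \<in> B \<Longrightarrow> sel K \<in> K \<inter> {c..d} \<and> poly Q (sel K) < 0"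
    using neg by metis
  show "card B' \<le> Suc (degree Q)"
  proof (cases "B' = {}")
    case False
    define M where "M = Max (sel ` B')"
    have "M \<in> sel ` B'" unfolding M_def using False B' by (intro Max_in) auto
    then obtain K0 where K0: "K0 \<in> B'" "sel K0 = M" by auto
    have nonoverlap: "K = K'" if "K \<in> B" "K' \<in> B" "x \<in> K" "x \<in> K'" for K K' x
      using that B components_nonoverlap by blast
    \<comment> \<open>Every component other than the rightmost one contains a root of \<open>Q\<close>: the first point
      to the right of its selected point where \<open>Q \<ge> 0\<close>.\<close>
    have root: "\<exists>\<rho>\<in>K. poly Q \<rho> = 0" if K: "K \<in> B' - {K0}" for K
    proof -
      define s where "s = sel K"
      have KB: "K \<in> B" "K0 \<in> B" using K K0 B' by auto
      have s: "s \<in> K" "s \<in> {c..d}" "poly Q s < 0" using sel[OF KB(1)] unfolding s_def by auto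
      have M: "M \<in> K0" "M \<in> {c..d}" using sel[OF KB(2)] K0 by auto
      have "s \<le> M" unfolding M_def s_def using B' K by auto
      have "\<not> {s..M} \<subseteq> W"
      proof
        assume "{s..M} \<subseteq> W"
        then have "{s..M} \<subseteq> K"
          by (intro components_maximal[of K W]) (use KB B s \<open>s \<le> M\<close> in auto)
        then show False using nonoverlap[OF KB, of M] M \<open>s \<le> M\<close> K by auto
      qed
      then obtain z where z: "z \<in> {s..M}" "0 \<le> poly Q z"
        using nonpos s M by fastforce
      define Z where "Z = {u \<in> {s..M}. 0 \<le> poly Q u}"
      have "Z = {s..M} \<inter> poly Q -` {0..}" unfolding Z_def by auto
      then have "closed Z" by (auto intro!: continuous_closed_preimage continuous_intros)
      moreover have "Z \<noteq> {}" using z unfolding Z_def by auto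
      moreover have "bdd_below Z" unfolding Z_def by (auto simp: bdd_below_def)
      ultimately have \<rho>Z: "Inf Z \<in> Z" by (intro closed_contains_Inf)
      define \<rho> where "\<rho> = Inf Z"
      have below: "poly Q x < 0" if "s \<le> x" "x < \<rho>" for x
      proof (rule ccontr)
        assume "\<not> poly Q x < 0"
        then have "x \<in> Z" using that \<rho>Z unfolding Z_def \<rho>_def by auto
        then have "\<rho> \<le> x" unfolding \<rho>_def by (intro cInf_lower) (auto simp: Z_def)
        then show False using that by simp
      qed
      have s\<rho>: "s \<le> \<rho>" "0 \<le> poly Q \<rho>" "\<rho> \<le> M" using \<rho>Z unfolding Z_def \<rho>_def by auto
      obtain y where y: "s \<le> y" "y \<le> \<rho>" "poly Q y = 0"
        using IVT'[of "poly Q" s 0 \<rho>, OF _ _ _ continuous_on_poly[OF continuous_on_id]] s s\<rho> by auto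
      then have "y = \<rho>" using below[of y] by force
      have "{s..\<rho>} \<subseteq> W"
      proof
        fix x assume x: "x \<in> {s..\<rho>}"
        then have "poly Q x \<le> 0"
          using below[of x] y \<open>y = \<rho>\<close> by (cases "x = \<rho>") auto
        then show "x \<in> W" using nonpos x s(2) M(2) s\<rho> by auto
      qed
      then have "{s..\<rho>} \<subseteq> K"
        by (intro components_maximal[of K W]) (use KB B s s\<rho> in auto)
      then show ?thesis using y \<open>y = \<rho>\<close> s\<rho> by auto
    qed
    obtain rho where rho: "\<And>K. K \<in> B' - {K0} \<Longrightarrow> rho K \<in> K \<and> poly Q (rho K) = 0"
      using root by metis
    have "Q \<noteq> 0" using sel[of K0] K0 B' by auto
    have "inj_on rho (B' - {K0})"
      using rho nonoverlap B' by (intro inj_onI) (metis DiffE subsetD)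
    then have "card (B' - {K0}) \<le> card {x. poly Q x = 0}"
      using rho poly_roots_finite[OF \<open>Q \<noteq> 0\<close>] by (intro card_inj_on_le) auto
    also have "\<dots> \<le> degree Q" using card_poly_roots_bound[OF \<open>Q \<noteq> 0\<close>] .
    finally show ?thesis using K0 B' by (simp add: card_Diff_singleton)
  qed simp
qed

lemma card_components_near_poly_le:
  fixes P :: "real poly" and g :: "real \<Rightarrow> real"
  assumes approx: "\<forall>x\<in>{c..d}. \<bar>g x - poly P x\<bar> \<le> lam"
    and "0 \<le> lam" "3 * lam < \<theta>" "degree P \<le> m"
    and W: "{t \<in> {c..d}. \<bar>g t\<bar> < \<theta>} \<subseteq> W"
  shows "finite {K \<in> components W. \<exists>x\<in>K \<inter> {c..d}. \<bar>g x\<bar> < lam} \<and>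
         card {K \<in> components W. \<exists>x\<in>K \<inter> {c..d}. \<bar>g x\<bar> < lam} \<le> Suc (2 * m)"
    (is "finite ?B \<and> card ?B \<le> _")
proof -
  define Q where "Q = P * P - [:4 * lam\<^sup>2:]"
  have Q: "poly Q x = (poly P x)\<^sup>2 - (2 * lam)\<^sup>2" for x
    unfolding Q_def by (simp add: power2_eq_square)
  have "degree Q \<le> 2 * m"
    using degree_diff_le_max[of "P * P" "[:4 * lam\<^sup>2:]"] degree_mult_le[of P P] assms(4)
    unfolding Q_def by simp
  moreover have "{x \<in> {c..d}. poly Q x \<le> 0} \<subseteq> W"
  proof
    fix x assume "x \<in> {x \<in> {c..d}. poly Q x \<le> 0}"
    then have "x \<in> {c..d}" "(poly P x)\<^sup>2 \<le> (2 * lam)\<^sup>2" using Q[of x] by auto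
    then have x: "x \<in> {c..d}" "\<bar>poly P x\<bar> \<le> 2 * lam"
      using abs_le_square_iff[of "poly P x" "2 * lam"] assms(2) by auto
    then show "x \<in> W" using approx assms(3) W by force
  qed
  moreover have "\<forall>K\<in>?B. \<exists>x\<in>K \<inter> {c..d}. poly Q x < 0"
  proof clarify
    fix K x assume x: "x \<in> K" "x \<in> {c..d}" "\<bar>g x\<bar> < lam"
    then have "\<bar>poly P x\<bar> < \<bar>2 * lam\<bar>" using approx by force
    then have "\<not> (2 * lam)\<^sup>2 \<le> (poly P x)\<^sup>2"
      using abs_le_square_iff[of "2 * lam" "poly P x"] by linarith
    then show "\<exists>x\<in>K \<inter> {c..d}. poly Q x < 0" using x Q[of x] by (intro bexI[of _ x]) auto
  qed
  ultimately have "finite ?B \<and> card ?B \<le> Suc (degree Q)"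
    by (intro card_components_le_Suc_degree[of ?B W c d Q]) auto
  then show ?thesis using \<open>degree Q \<le> 2 * m\<close> by auto
qed

lemma atLeastAtMost_grid_cover:
  fixes a b t :: real and N :: nat
  assumes "a \<le> t" "t \<le> b" "N \<ge> 1" "a < b"
  defines "h \<equiv> (b - a) / N"
  shows "\<exists>k<N. t \<in> {a + real k * h .. a + real (Suc k) * h}"
proof -
  have h: "h > 0" using assms by auto
  define y where "y = (t - a) / h"
  have y: "0 \<le> y" "y \<le> N" "t = a + y * h"
    using assms h unfolding y_def h_def by (auto simp: field_simps)
  define k where "k = min (N - 1) (nat \<lfloor>y\<rfloor>)"
  have "real k \<le> y \<and> y \<le> real k + 1"
  proof (cases "nat \<lfloor>y\<rfloor> \<le> N - 1")
    case True
    then show ?thesis unfolding k_def using y by linarith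
  next
    case False
    then have "y = N" using y assms(3) by linarith
    then show ?thesis using False assms(3) unfolding k_def by (auto simp: of_nat_diff)
  qed
  then have "t \<in> {a + real k * h .. a + real (Suc k) * h}"
    using y h by (auto intro: mult_right_mono)
  moreover have "k < N" unfolding k_def using assms(3) by auto
  ultimately show ?thesis by blast
qed

lemma exists_grid_size:
  fixes L lam M :: real and r :: nat
  assumes "0 \<le> L" "r \<ge> 1" "lam > 0" "M \<ge> 0"
  shows "\<exists>N :: nat. N \<ge> 1 \<and> real N \<le> 1 + L * M powr (1 / real r) * lam powr (- 1 / real r) \<and>
           M * (L / real N) ^ r \<le> lam"
proof -
  define X where "X = (M / lam) powr (1 / real r)"
  define N where "N = max 1 (nat \<lceil>L * X\<rceil>)"
  have X0: "0 \<le> X" unfolding X_def by simp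
  have N: "N \<ge> 1" "real N \<le> 1 + L * X" "L * X \<le> real N"
    unfolding N_def using assms X0 by (auto simp: of_nat_max) linarith+
  have "M * (L / real N) ^ r \<le> lam"
  proof (cases "M = 0")
    case False
    then have Xp: "X > 0" using assms unfolding X_def by auto
    have "L / real N \<le> 1 / X" using N Xp by (auto simp: field_simps)
    then have "(L / real N) ^ r \<le> (1 / X) ^ r" using assms N by (intro power_mono) auto
    also have "\<dots> = lam / M"
      using powr_power[of "M / lam" "1 / real r" r] False assms
      unfolding X_def by (simp add: power_divide)
    finally show ?thesis using False assms by (simp add: field_simps)
  qed (use assms in simp)
  moreover have "X = M powr (1 / real r) * lam powr (- 1 / real r)"
    unfolding X_def powr_divide using powr_minus[of lam "1 / real r"] by (simp add: divide_inverse)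
  ultimately show ?thesis using N by (metis mult.assoc)
qed

lemma card_components_meeting_block_le:
  fixes g :: "real \<Rightarrow> real"
  assumes Dg: "Cr_with_derivs r g {a..b} D" and r: "r \<ge> 1"
    and ends: "a \<le> c" "c \<le> d" "d \<le> b"
    and fine: "sup_norm_on {a..b} (D r) * (d - c) ^ r \<le> lam" and "0 \<le> lam" "3 * lam < \<theta>"
  shows "finite {K \<in> components {t \<in> {a..b}. \<bar>g t\<bar> < \<theta>}. \<exists>x\<in>K \<inter> {c..d}. \<bar>g x\<bar> < lam} \<and>
         card {K \<in> components {t \<in> {a..b}. \<bar>g t\<bar> < \<theta>}. \<exists>x\<in>K \<inter> {c..d}. \<bar>g x\<bar> < lam}
           \<le> 2 * r - 1"
    (is "finite ?B \<and> card ?B \<le> _")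
proof -
  obtain P where "degree P < r"
    and "\<forall>x\<in>{c..d}. \<bar>g x - poly P x\<bar> \<le> sup_norm_on {a..b} (D r) * (d - c) ^ r"
    using Cr_with_derivs_poly_approx[OF Dg r ends] by blast
  then have "\<forall>x\<in>{c..d}. \<bar>g x - poly P x\<bar> \<le> lam" "degree P \<le> r - 1"
    using fine by force+
  moreover have "{t \<in> {c..d}. \<bar>g t\<bar> < \<theta>} \<subseteq> {t \<in> {a..b}. \<bar>g t\<bar> < \<theta>}" using ends by auto
  ultimately have "finite ?B \<and> card ?B \<le> Suc (2 * (r - 1))"
    using card_components_near_poly_le \<open>0 \<le> lam\<close> \<open>3 * lam < \<theta>\<close> by blast
  moreover have "Suc (2 * (r - 1)) = 2 * r - 1" using r by simp
  ultimately show ?thesis by simp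
qed

lemma card_components_sublevel_le:
  fixes g :: "real \<Rightarrow> real"
  assumes Dg: "Cr_with_derivs r g {a..b} D" and r: "r \<ge> 1" and "a < b" "0 < lam" "3 * lam < \<theta>"
  defines "F \<equiv> {K \<in> components {t \<in> {a..b}. \<bar>g t\<bar> < \<theta>}. \<exists>x\<in>K. \<bar>g x\<bar> < lam}"
  shows "finite F \<and> real (card F) \<le> (2 * real r - 1) *
           (1 + (b - a) * sup_norm_on {a..b} (D r) powr (1 / real r) * lam powr (- 1 / real r))"
proof -
  define W where "W = {t \<in> {a..b}. \<bar>g t\<bar> < \<theta>}"
  define M where "M = sup_norm_on {a..b} (D r)"
  have "0 \<le> M"
    unfolding M_def using sup_norm_on_nonneg Cr_with_derivs_continuous_on[OF Dg] assms(3) by simp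
  then obtain N :: nat
    where N: "N \<ge> 1" "real N \<le> 1 + (b - a) * M powr (1 / real r) * lam powr (- 1 / real r)"
    and fine: "M * ((b - a) / real N) ^ r \<le> lam"
    using exists_grid_size[of "b - a" r lam M] assms by auto
  define h where "h = (b - a) / real N"
  have h0: "0 < h" and Nh: "real N * h = b - a" using N assms(3) unfolding h_def by auto
  define Fk where
    "Fk k = {K \<in> components W. \<exists>x\<in>K \<inter> {a + real k * h .. a + real (Suc k) * h}. \<bar>g x\<bar> < lam}"
    for k
  have block: "finite (Fk k) \<and> card (Fk k) \<le> 2 * r - 1" if "k < N" for k
  proof -
    have "real (Suc k) * h \<le> real N * h" using that h0 by (intro mult_right_mono) auto
    then have "a \<le> a + real k * h" "a + real k * h \<le> a + real (Suc k) * h" "a + real (Suc k) * h \<le> b"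
      using h0 Nh by (auto simp: algebra_simps)
    moreover have "M * (a + real (Suc k) * h - (a + real k * h)) ^ r \<le> lam"
      using fine unfolding h_def[symmetric] by (simp add: algebra_simps)
    ultimately show ?thesis
      unfolding Fk_def W_def M_def using card_components_meeting_block_le[OF Dg r] assms by simp
  qed
  have "F \<subseteq> (\<Union>k<N. Fk k)"
  proof
    fix K assume "K \<in> F"
    then obtain x where K: "K \<in> components W" "x \<in> K" "\<bar>g x\<bar> < lam"
      unfolding F_def W_def by auto
    then have "x \<in> {a..b}" using in_components_subset unfolding W_def by blast
    then obtain k where "k < N" "x \<in> {a + real k * h .. a + real (Suc k) * h}"
      using atLeastAtMost_grid_cover[of a x b N] N assms(3) unfolding h_def by auto
    then have "K \<in> Fk k" using K unfolding Fk_def by blast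
    then show "K \<in> (\<Union>k<N. Fk k)" using \<open>k < N\<close> by blast
  qed
  moreover have fin: "finite (\<Union>k<N. Fk k)" using block by auto
  ultimately have "finite F" by (rule finite_subset)
  have "card F \<le> card (\<Union>k<N. Fk k)" using fin \<open>F \<subseteq> _\<close> by (rule card_mono)
  also have "\<dots> \<le> (\<Sum>k<N. card (Fk k))" by (rule card_UN_le) simp
  also have "\<dots> \<le> N * (2 * r - 1)"
    using sum_bounded_above[of "{..<N}" "\<lambda>k. card (Fk k)" "2 * r - 1"] block by simp
  finally have "card F \<le> N * (2 * r - 1)" .
  have "real (2 * r - 1) = 2 * real r - 1" using r by (simp add: of_nat_diff)
  then have "real (card F) \<le> real N * (2 * real r - 1)"
    using \<open>card F \<le> N * (2 * r - 1)\<close> by (metis of_nat_le_iff of_nat_mult)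
  also have "\<dots> \<le> (1 + (b - a) * M powr (1 / real r) * lam powr (- 1 / real r)) * (2 * real r - 1)"
    using N r by (intro mult_right_mono) auto
  finally show ?thesis using \<open>finite F\<close> unfolding M_def by (simp add: mult.commute)
qed

lemma ivl_length_ge:
  assumes "bounded K" "{p..q} \<subseteq> K" "p \<le> q"
  shows "q - p \<le> ivl_length K"
proof -
  have "p \<in> K" "q \<in> K" using assms(2,3) by auto
  then have "q \<le> Sup K" "Inf K \<le> p"
    using bounded_imp_bdd_above[OF assms(1)] bounded_imp_bdd_below[OF assms(1)]
    by (auto intro: cSup_upper cInf_lower)
  then show ?thesis unfolding ivl_length_def by simp
qed

lemma component_sublevel_length_ge:
  fixes g :: "real \<Rightarrow> real"
  assumes lip: "\<And>x y. x \<in> {a..b} \<Longrightarrow> y \<in> {a..b} \<Longrightarrow> \<bar>g x - g y\<bar> \<le> \<bar>x - y\<bar>"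
    and K: "K \<in> components {t \<in> {a..b}. \<bar>g t\<bar> < \<theta>}"
    and s: "s \<in> K" "\<bar>g s\<bar> + \<delta> < \<theta>" and "0 \<le> \<delta>" "\<delta> \<le> b - a"
  shows "\<delta> \<le> ivl_length K"
proof -
  have KI: "K \<subseteq> {a..b}" using in_components_subset[OF K] by auto
  then have sI: "a \<le> s" "s \<le> b" using s by auto
  define p where "p = max a (s - \<delta>)"
  define q where "q = min b (s + \<delta>)"
  have "{p..q} \<subseteq> K"
  proof (rule components_maximal[OF K])
    show "{p..q} \<subseteq> {t \<in> {a..b}. \<bar>g t\<bar> < \<theta>}"
    proof
      fix t assume t: "t \<in> {p..q}"
      then have "t \<in> {a..b}" "\<bar>t - s\<bar> \<le> \<delta>" unfolding p_def q_def by auto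
      then show "t \<in> {t \<in> {a..b}. \<bar>g t\<bar> < \<theta>}"
        using lip[of t s] s KI by auto
    qed
    have "s \<in> K \<inter> {p..q}" using s sI \<open>0 \<le> \<delta>\<close> unfolding p_def q_def by auto
    then show "K \<inter> {p..q} \<noteq> {}" by blast
  qed auto
  moreover have "\<delta> \<le> q - p" "p \<le> q"
    using sI assms(5,6) unfolding p_def q_def by auto
  ultimately show ?thesis
    using ivl_length_ge[of K p q] KI bounded_subset[OF bounded_closed_interval KI] by linarith
qed

lemma component_sublevel_openin_interval:
  fixes g :: "real \<Rightarrow> real"
  assumes "continuous_on {a..b} g" "K \<in> components {t \<in> {a..b}. \<bar>g t\<bar> < \<theta>}"
  shows "is_interval K \<and> openin (top_of_set {a..b}) K"
proof -
  define W where "W = {t \<in> {a..b}. \<bar>g t\<bar> < \<theta>}"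
  have "W = {a..b} \<inter> (\<lambda>t. \<bar>g t\<bar>) -` {..<\<theta>}" unfolding W_def by auto
  then have W: "openin (top_of_set {a..b}) W"
    using assms(1) by (auto intro!: continuous_openin_preimage_gen continuous_intros)
  then have "locally connected W"
    by (rule locally_open_subset[OF convex_imp_locally_connected, rotated]) simp
  then have "openin (top_of_set W) K"
    using assms(2) unfolding W_def by (rule openin_components_locally_connected)
  then have "openin (top_of_set {a..b}) K" using W by (rule openin_trans)
  moreover have "is_interval K"
    using in_components_connected[OF assms(2)] is_interval_connected_1 by blast
  ultimately show ?thesis by simp
qed

theorem mainTheorem5:
  fixes a b C lam :: real and r :: nat and g :: "real \<Rightarrow> real" and D :: "nat \<Rightarrow> real \<Rightarrow> real"
  assumes "a < b"
    and "r \<ge> 1"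
    and "Cr_with_derivs r g {a..b} D"
    and "sup_norm_on {a..b} (D 1) \<le> 1"
    and "C > 0"
    and "0 < lam" and "lam \<le> sup_norm_on {a..b} g"
    and "C * lam \<le> b - a"
  shows "\<exists>F :: real set set. finite F \<and> pairwise disjnt F \<and>
     (\<forall>J\<in>F. J \<noteq> {} \<and> is_interval J \<and> openin (top_of_set {a..b}) J \<and> ivl_length J \<ge> C * lam) \<and>
     real (card F) \<le> 30 * real r * (1 + (b - a) * (sup_norm_on {a..b} (D r)) powr (1 / real r) * lam powr (- 1 / real r)) \<and>
     {t \<in> {a..b}. \<bar>g t\<bar> < lam} \<subseteq> \<Union>F \<and>
     \<Union>F \<subseteq> {t \<in> {a..b}. \<bar>g t\<bar> < (8 + C) * lam}"
proof -
  define W where "W = {t \<in> {a..b}. \<bar>g t\<bar> < (8 + C) * lam}"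
  define F where "F = {K \<in> components W. \<exists>x\<in>K. \<bar>g x\<bar> < lam}"
  define R where "R = 1 + (b - a) * sup_norm_on {a..b} (D r) powr (1 / real r) * lam powr (- 1 / real r)"
  have Clam: "0 < C * lam" using assms by simp
  have lip: "\<bar>g x - g y\<bar> \<le> \<bar>x - y\<bar>" if "x \<in> {a..b}" "y \<in> {a..b}" for x y
    using Cr_with_derivs_lipschitz[OF assms(3,2) that] mult_right_mono[OF assms(4), of "\<bar>x - y\<bar>"]
    by simp
  have "J \<noteq> {} \<and> is_interval J \<and> openin (top_of_set {a..b}) J \<and> C * lam \<le> ivl_length J"
    if "J \<in> F" for J
  proof -
    obtain s where "J \<in> components W" "s \<in> J" "\<bar>g s\<bar> < lam" using \<open>J \<in> F\<close> unfolding F_def by auto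
    then show ?thesis
      using component_sublevel_openin_interval[OF Cr_with_derivs_imp_continuous_on[OF assms(3)]]
        component_sublevel_length_ge[OF lip, where K = J and s = s and \<delta> = "C * lam"] assms Clam
      unfolding W_def by (auto simp: algebra_simps)
  qed
  moreover have "finite F \<and> real (card F) \<le> (2 * real r - 1) * R"
    using card_components_sublevel_le[OF assms(3,2,1,6), of "(8 + C) * lam"] Clam assms(6)
    unfolding F_def W_def R_def by (simp add: distrib_right)
  moreover have "(2 * real r - 1) * R \<le> 30 * real r * R"
    using assms(1) by (intro mult_right_mono) (auto simp: R_def)
  moreover have "{t \<in> {a..b}. \<bar>g t\<bar> < lam} \<subseteq> \<Union>F"
  proof
    fix t assume t: "t \<in> {t \<in> {a..b}. \<bar>g t\<bar> < lam}"
    then have "t \<in> W" using Clam unfolding W_def by (auto simp: distrib_right)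
    then obtain K where "K \<in> components W" "t \<in> K" using Union_components[of W] by blast
    then show "t \<in> \<Union>F" using t unfolding F_def by auto
  qed
  moreover have "\<Union>F \<subseteq> W" "pairwise disjnt F"
    unfolding F_def pairwise_def disjnt_def using in_components_subset components_nonoverlap by blast+
  ultimately show ?thesis unfolding W_def R_def by (intro exI[of _ F]) auto
qed

end
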